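(* Let $\lambda_0,\dots,\lambda_n,\eta_n\in\mathbb{C}$, $a\neq b$ real, and suppose $E_{(\lambda_0,\dots,\lambda_{n-1},\lambda_n)}$, $E_{(\lambda_0,\dots,\lambda_{n-1},\eta_n)}$ and $E_{(\lambda_0,\dots,\lambda_{n-1})}$ are extended Chebyshev systems for $\{a,b\}$. If for some $k\in\{0,\dots,n\}$ one has $p_{(\lambda_0,\dots,\lambda_{n-1},\lambda_n),k}(x)=p_{(\lambda_0,\dots,\lambda_{n-1},\eta_n),k}(x)$ for all $x\in(a,b)$, then $\lambda_n=\eta_n$. (Since the spaces do not depend on the ordering of the eigenvalues, the same holds with $\lambda_n$ replaced by any other eigenvalue.)
   Context: $E_{(\lambda_0,\dots,\lambda_m)}$ denotes the space of all $f\in C^\infty(\mathbb{R},\mathbb{C})$ with $(\frac{d}{dx}-\lambda_0)\cdots(\frac{d}{dx}-\lambda_m)f=0$ (dimension $m+1$, independent of the ordering of the $\lambda_j$). A zero of order (exactly) $k$ at $a$ means $f(a)=\dots=f^{(k-1)}(a)=0$, $f^{(k)}(a)\neq0$. $E_{(\lambda_0,\dots,\lambda_m)}$ is an extended Chebyshev system for $A\subset\mathbb{R}$ if every nonzero element has at most $m$ zeros in $A$ counted with multiplicity. In that case, for $A=\{a,b\}$, $a\ne b$, the Bernstein basis $p_{(\lambda_0,\dots,\lambda_m),k}$, $k=0,\dots,m$, is the unique family in $E_{(\lambda_0,\dots,\lambda_m)}$ with $p_{(\lambda_0,\dots,\lambda_m),k}$ having a zero of order exactly $k$ at $a$ and exactly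 $m-k$ at $b$, and $p^{(k)}_{(\lambda_0,\dots,\lambda_m),k}(a)=1$. *)

theory Defs
  imports "HOL-Analysis.Analysis"
begin

definition vderiv :: "(real \<Rightarrow> complex) \<Rightarrow> (real \<Rightarrow> complex)" where
  "vderiv f = (\<lambda>x. vector_derivative f (at x))"

definition nderiv :: "nat \<Rightarrow> (real \<Rightarrow> complex) \<Rightarrow> (real \<Rightarrow> complex)" where
  "nderiv k f = (vderiv ^^ k) f"

definition smooth :: "(real \<Rightarrow> complex) \<Rightarrow> bool" where
  "smooth f \<longleftrightarrow> (\<forall>k x. (nderiv k f has_vector_derivative nderiv (Suc k) f x) (at x))"

text \<open>The operator (d/dx - l0) ... (d/dx - lm) for the list [l0, ..., lm].\<close>
fun diffop :: "complex list \<Rightarrow> (real \<Rightarrow> complex) \<Rightarrow> (real \<Rightarrow> complex)" where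
  "diffop [] f = f"
| "diffop (l # ls) f = (\<lambda>x. vderiv (diffop ls f) x - l * diffop ls f x)"

text \<open>The space E of exponential polynomials with the given eigenvalues.\<close>
definition Espace :: "complex list \<Rightarrow> (real \<Rightarrow> complex) set" where
  "Espace ls = {f. smooth f \<and> diffop ls f = (\<lambda>_. 0)}"

definition zero_order_ge :: "(real \<Rightarrow> complex) \<Rightarrow> real \<Rightarrow> nat \<Rightarrow> bool" where
  "zero_order_ge f a k \<longleftrightarrow> (\<forall>j<k. nderiv j f a = 0)"

definition zero_order_exact :: "(real \<Rightarrow> complex) \<Rightarrow> real \<Rightarrow> nat \<Rightarrow> bool" where
  "zero_order_exact f a k \<longleftrightarrow> zero_order_ge f a k \<and> nderiv k f a \<noteq> 0"

text \<open>E_(l0..lm) (m+1 = length ls) is an extended Chebyshev system for A: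
  every nonzero element has at most m zeros in A counted with multiplicity.\<close>
definition ECT :: "complex list \<Rightarrow> real set \<Rightarrow> bool" where
  "ECT ls A \<longleftrightarrow> (\<forall>f \<in> Espace ls. f \<noteq> (\<lambda>_. 0) \<longrightarrow>
      (\<forall>S mult. S \<subseteq> A \<longrightarrow> finite S \<longrightarrow> (\<forall>x\<in>S. zero_order_ge f x (mult x))
          \<longrightarrow> sum mult S \<le> length ls - 1))"

text \<open>Bernstein basis element p_{(l0..lm),k} for {a,b}: the unique element of E with
  a zero of order exactly k at a, exactly m-k at b, and k-th derivative 1 at a.\<close>
definition bernstein :: "complex list \<Rightarrow> real \<Rightarrow> real \<Rightarrow> nat \<Rightarrow> (real \<Rightarrow> complex)" where
  "bernstein ls a b k = (THE p. p \<in> Espace ls \<and> zero_order_exact p a k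
      \<and> zero_order_exact p b (length ls - 1 - k) \<and> nderiv k p a = 1)"

end

theory Submission
  imports Defs
begin

(* Let p and q be the Bernstein elements of index k for the eigenvalue lists
   lams @ [lam] and lams @ [eta], m = length lams.  Both are smooth and agree on the open
   interval between a and b, hence all their derivatives agree at the endpoints a and b.
   Applying d/dx - lam to p and d/dx - eta to q lands both in E_lams, so their difference h
   lies in E_lams; at the endpoints its j-th derivative equals (eta - lam) times the j-th
   derivative of p.  Thus h has a zero of order k at a and of order m - k at b, i.e. m zeros
   in total, which forces h = 0 because E_lams is an extended Chebyshev system of dimension m.
   Evaluating the k-th derivative of h at a, where p^(k)(a) = 1, gives lam = eta. *)

section \<open>Iterated derivatives and smooth functions\<close>

lemma nderiv_0 [simp]: "nderiv 0 f = f"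
  by (simp add: nderiv_def)

lemma nderiv_Suc: "nderiv (Suc k) f = vderiv (nderiv k f)"
  by (simp add: nderiv_def)

lemma nderiv_vderiv: "nderiv k (vderiv f) = nderiv (Suc k) f"
  by (simp add: nderiv_def funpow_Suc_right del: funpow.simps)

lemma smoothD: "smooth f \<Longrightarrow> (nderiv k f has_vector_derivative nderiv (Suc k) f x) (at x)"
  by (simp add: smooth_def)

lemma smooth_vderiv: "smooth f \<Longrightarrow> smooth (vderiv f)"
  by (simp add: smooth_def nderiv_vderiv)

lemma vderiv_eq: "(\<And>x. (h has_vector_derivative h' x) (at x)) \<Longrightarrow> vderiv h = h'"
  by (auto simp: vderiv_def fun_eq_iff intro: vector_derivative_at)

lemma smooth_continuous_on: "smooth f \<Longrightarrow> continuous_on S (nderiv k f)"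
  by (intro continuous_at_imp_continuous_on ballI has_vector_derivative_continuous) (rule smoothD)

lemma nderiv_lin:
  assumes "smooth f" "smooth g"
  shows "nderiv k (\<lambda>x. c * f x + d * g x) = (\<lambda>x. c * nderiv k f x + d * nderiv k g x)"
proof (induction k)
  case 0 then show ?case by simp
next
  case (Suc k)
  have "((\<lambda>x. c * nderiv k f x + d * nderiv k g x) has_vector_derivative
         c * nderiv (Suc k) f x + d * nderiv (Suc k) g x) (at x)" for x
    using smoothD[OF assms(1)] smoothD[OF assms(2)] by (intro derivative_intros) auto
  then show ?case
    by (simp add: nderiv_Suc Suc vderiv_eq)
qed

lemma smooth_lin:
  assumes "smooth f" "smooth g"
  shows "smooth (\<lambda>x. c * f x + d * g x)"
  unfolding smooth_def nderiv_lin[OF assms]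
  using smoothD[OF assms(1)] smoothD[OF assms(2)] by (auto intro!: derivative_intros)

lemma nderiv_cmult: "smooth f \<Longrightarrow> nderiv k (\<lambda>x. c * f x) = (\<lambda>x. c * nderiv k f x)"
  using nderiv_lin[of f f k c 0] by simp

lemma nderiv_diff:
  "smooth f \<Longrightarrow> smooth g \<Longrightarrow> nderiv k (\<lambda>x. f x - g x) = (\<lambda>x. nderiv k f x - nderiv k g x)"
  using nderiv_lin[of f g k 1 "-1"] by simp

lemma nderiv_zero [simp]: "nderiv k (\<lambda>_. 0) = (\<lambda>_. 0)"
  by (induction k) (auto simp: nderiv_Suc vderiv_def vector_derivative_at)

lemma smooth_zero: "smooth (\<lambda>_. 0)"
  by (simp add: smooth_def)

text \<open>A smooth function vanishing on an open set has all derivatives zero on its closure;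
  this is how agreement on the open interval (a, b) transfers to the endpoints.\<close>
lemma nderiv_zero_on_closure:
  assumes "smooth r" "open U" "\<And>x. x \<in> U \<Longrightarrow> r x = 0"
  shows "\<forall>x\<in>closure U. nderiv j r x = 0"
proof -
  have on_U: "\<forall>x\<in>U. nderiv j r x = 0" for j
  proof (induction j)
    case 0 then show ?case using assms(3) by simp
  next
    case (Suc j)
    show ?case
    proof
      fix x assume x: "x \<in> U"
      have "((\<lambda>_. 0) has_vector_derivative 0) (at x)" by simp
      then have "(nderiv j r has_vector_derivative 0) (at x)"
        by (rule has_vector_derivative_transform_within_open[OF _ assms(2) x]) (use Suc in auto)
      then show "nderiv (Suc j) r x = 0"
        by (simp add: nderiv_Suc vderiv_def vector_derivative_at)
    qed
  qed
  show ?thesis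
    using continuous_constant_on_closure[OF smooth_continuous_on[OF assms(1)]] on_U by blast
qed

lemma nderiv_eq_on_closure:
  assumes "smooth p" "smooth q" "open U" "\<And>x. x \<in> U \<Longrightarrow> p x = q x" "x \<in> closure U"
  shows "nderiv j p x = nderiv j q x"
  using nderiv_zero_on_closure[of "\<lambda>x. p x - q x" U j] assms
  by (simp add: smooth_lin[of p q 1 "-1", simplified] nderiv_diff)

section \<open>The spaces E\<close>

lemma diffop_append: "diffop (ls @ [l]) f = diffop ls (\<lambda>x. vderiv f x - l * f x)"
  by (induction ls) auto

lemma smooth_diffop: "smooth f \<Longrightarrow> smooth (diffop ls f)"
proof (induction ls)
  case Nil then show ?case by simp
next
  case (Cons l ls)
  have "smooth (\<lambda>x. 1 * vderiv (diffop ls f) x + (-l) * diffop ls f x)"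
    by (intro smooth_lin smooth_vderiv Cons.IH Cons.prems)
  then show ?case by simp
qed

lemma diffop_lin:
  assumes "smooth f" "smooth g"
  shows "diffop ls (\<lambda>x. c * f x + d * g x) = (\<lambda>x. c * diffop ls f x + d * diffop ls g x)"
proof (induction ls)
  case Nil then show ?case by simp
next
  case (Cons l ls)
  have "vderiv (\<lambda>x. c * diffop ls f x + d * diffop ls g x)
      = (\<lambda>x. c * vderiv (diffop ls f) x + d * vderiv (diffop ls g) x)"
    using nderiv_lin[OF smooth_diffop[OF assms(1)] smooth_diffop[OF assms(2)], where k=1 and c=c and d=d]
    by (simp add: nderiv_Suc)
  then show ?case by (simp add: Cons algebra_simps)
qed

lemma Espace_lin:
  assumes "f \<in> Espace ls" "g \<in> Espace ls"
  shows "(\<lambda>x. c * f x + d * g x) \<in> Espace ls"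
  using assms by (simp add: Espace_def smooth_lin diffop_lin)

lemma Espace_cmult: "f \<in> Espace ls \<Longrightarrow> (\<lambda>x. c * f x) \<in> Espace ls"
  using Espace_lin[of f ls f c 0] by simp

lemma Espace_diff: "f \<in> Espace ls \<Longrightarrow> g \<in> Espace ls \<Longrightarrow> (\<lambda>x. f x - g x) \<in> Espace ls"
  using Espace_lin[of f ls g 1 "-1"] by simp

lemma Espace_zero: "(\<lambda>_. 0) \<in> Espace ls"
  using diffop_lin[OF smooth_zero smooth_zero, of ls 0 0]
  by (simp add: Espace_def smooth_zero)

lemma Espace_sum:
  assumes "finite I" "\<And>i. i \<in> I \<Longrightarrow> \<phi> i \<in> Espace ls"
  shows "(\<lambda>x. \<Sum>i\<in>I. c i * \<phi> i x) \<in> Espace ls \<and>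
         (\<forall>k. nderiv k (\<lambda>x. \<Sum>i\<in>I. c i * \<phi> i x) = (\<lambda>x. \<Sum>i\<in>I. c i * nderiv k (\<phi> i) x))"
  using assms
proof (induction I rule: finite_induct)
  case empty then show ?case by (simp add: Espace_zero)
next
  case (insert i I)
  then have IH: "(\<lambda>x. \<Sum>i\<in>I. c i * \<phi> i x) \<in> Espace ls"
    "\<And>k. nderiv k (\<lambda>x. \<Sum>i\<in>I. c i * \<phi> i x) = (\<lambda>x. \<Sum>i\<in>I. c i * nderiv k (\<phi> i) x)"
    and i: "\<phi> i \<in> Espace ls" by auto
  have sum_eq: "(\<lambda>x. \<Sum>i\<in>insert i I. c i * \<phi> i x) = (\<lambda>x. c i * \<phi> i x + 1 * (\<Sum>i\<in>I. c i * \<phi> i x))"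
    using insert by simp
  have "nderiv k (\<lambda>x. c i * \<phi> i x + 1 * (\<Sum>i\<in>I. c i * \<phi> i x)) =
     (\<lambda>x. c i * nderiv k (\<phi> i) x + 1 * (\<Sum>i\<in>I. c i * nderiv k (\<phi> i) x))" for k
    using nderiv_lin[of "\<phi> i" "\<lambda>x. \<Sum>i\<in>I. c i * \<phi> i x" k "c i" 1] i IH
    by (simp add: Espace_def)
  then show ?case
    unfolding sum_eq using Espace_lin[OF i IH(1), of "c i" 1] insert by simp
qed

lemma Espace_reduce:
  assumes "p \<in> Espace (ls @ [l])"
  shows "(\<lambda>x. vderiv p x - l * p x) \<in> Espace ls"
proof -
  have "smooth p" using assms by (simp add: Espace_def)
  then have "smooth (\<lambda>x. 1 * vderiv p x + (-l) * p x)" by (intro smooth_lin smooth_vderiv)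
  then show ?thesis using assms by (simp add: Espace_def diffop_append)
qed

lemma nderiv_reduce:
  assumes "smooth p"
  shows "nderiv j (\<lambda>x. vderiv p x - l * p x) = (\<lambda>x. nderiv (Suc j) p x - l * nderiv j p x)"
  using nderiv_lin[OF smooth_vderiv[OF assms] assms, of j 1 "-l"] by (simp add: nderiv_vderiv)

lemma nderiv_reduce_difference:
  assumes "smooth p" "smooth q" "\<And>j. nderiv j p x = nderiv j q x"
  shows "nderiv j (\<lambda>y. (vderiv p y - l * p y) - (vderiv q y - e * q y)) x = (e - l) * nderiv j p x"
proof -
  have "smooth (\<lambda>y. 1 * vderiv p y + (-l) * p y)" "smooth (\<lambda>y. 1 * vderiv q y + (-e) * q y)"
    using assms by (intro smooth_lin smooth_vderiv; simp)+
  then have "smooth (\<lambda>y. vderiv p y - l * p y)" "smooth (\<lambda>y. vderiv q y - e * q y)"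
    by simp_all
  then have "nderiv j (\<lambda>y. (vderiv p y - l * p y) - (vderiv q y - e * q y))
      = (\<lambda>y. nderiv j (\<lambda>y. vderiv p y - l * p y) y - nderiv j (\<lambda>y. vderiv q y - e * q y) y)"
    by (rule nderiv_diff)
  then show ?thesis
    unfolding nderiv_reduce[OF assms(1)] nderiv_reduce[OF assms(2)]
    using assms(3) by (simp add: algebra_simps)
qed

section \<open>Initial value problems in E\<close>

lemma global_antiderivative:
  fixes H :: "real \<Rightarrow> complex"
  assumes "continuous_on UNIV H"
  shows "\<exists>F. \<forall>x. (F has_vector_derivative H x) (at x)"
proof -
  have "\<exists>F. \<forall>x::real. (-\<infinity>::ereal) < x \<longrightarrow> x < (\<infinity>::ereal) \<longrightarrow> (F has_vector_derivative H x) (at x)"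
    by (rule einterval_antiderivative) (use assms in \<open>auto simp: continuous_on_eq_continuous_at\<close>)
  then show ?thesis by auto
qed

lemma exp_has_vector_derivative:
  fixes l :: complex
  shows "((\<lambda>x::real. exp (l * (of_real x - of_real a))) has_vector_derivative
     l * exp (l * (of_real x - of_real a))) (at x)"
proof -
  have "((\<lambda>z. exp (l * (z - of_real a))) has_field_derivative l * exp (l * (of_real x - of_real a)))
      (at (of_real x))"
    by (auto intro!: derivative_eq_intros)
  then show ?thesis by (rule has_vector_derivative_real_field)
qed

text \<open>The first-order equation f' = l f + g with smooth g has a smooth solution with any
  prescribed value at a (variation of constants).\<close>
lemma first_order_solution:
  assumes g: "smooth g"
  shows "\<exists>f. smooth f \<and> f a = y0 \<and> (\<forall>k. nderiv (Suc k) f = (\<lambda>x. l * nderiv k f x + nderiv k g x))"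
proof -
  define E where "E = (\<lambda>x::real. exp (l * (of_real x - of_real a)))"
  define H where "H = (\<lambda>x. exp (- l * (of_real x - of_real a)) * g x)"
  have "continuous_on UNIV H"
    unfolding H_def using smooth_continuous_on[OF g, of UNIV 0] by (auto intro!: continuous_intros)
  then obtain F where F: "\<And>x. (F has_vector_derivative H x) (at x)"
    using global_antiderivative by blast
  define f where "f = (\<lambda>x. E x * (y0 + F x - F a))"
  have f_deriv: "(f has_vector_derivative l * f x + g x) (at x)" for x
  proof -
    have "(f has_vector_derivative E x * H x + l * E x * (y0 + F x - F a)) (at x)"
      unfolding f_def E_def using exp_has_vector_derivative[of l a x] F[of x]
      by (auto intro!: derivative_eq_intros)
    moreover have "E x * H x = g x"
    proof -
      have "exp (- l * (of_real x - of_real a)) * exp (l * (of_real x - of_real a)) = 1"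
        by (simp add: exp_add[symmetric])
      then show ?thesis unfolding E_def H_def by (simp add: algebra_simps)
    qed
    ultimately show ?thesis by (simp add: f_def algebra_simps)
  qed
  have "(\<forall>x. (nderiv k f has_vector_derivative nderiv (Suc k) f x) (at x)) \<and>
      nderiv (Suc k) f = (\<lambda>x. l * nderiv k f x + nderiv k g x)" for k
  proof (induction k)
    case 0
    have "vderiv f = (\<lambda>x. l * f x + g x)" using f_deriv by (rule vderiv_eq)
    then show ?case using f_deriv by (simp add: nderiv_Suc)
  next
    case (Suc k)
    have d: "((\<lambda>x. l * nderiv k f x + nderiv k g x) has_vector_derivative
          l * nderiv (Suc k) f x + nderiv (Suc k) g x) (at x)" for x
      using Suc.IH smoothD[OF g] by (auto intro!: derivative_eq_intros)
    then have "vderiv (nderiv (Suc k) f) = (\<lambda>x. l * nderiv (Suc k) f x + nderiv (Suc k) g x)"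
      using Suc.IH by (simp add: vderiv_eq)
    then show ?case using d Suc.IH by (simp add: nderiv_Suc[of "Suc k"])
  qed
  moreover have "f a = y0" by (simp add: f_def E_def)
  ultimately show ?thesis by (auto simp: smooth_def)
qed

text \<open>Every initial jet of length (length ls) at a point is realised by an element of E_ls;
  induction peels off the last eigenvalue and solves a first-order equation.\<close>
lemma Espace_initial_values:
  "\<exists>f\<in>Espace ls. \<forall>j<length ls. nderiv j f a = y j"
proof (induction ls arbitrary: y rule: rev_induct)
  case Nil then show ?case using Espace_zero by auto
next
  case (snoc l ls)
  obtain g where g: "g \<in> Espace ls" "\<And>j. j < length ls \<Longrightarrow> nderiv j g a = y (Suc j) - l * y j"
    using snoc.IH[of "\<lambda>j. y (Suc j) - l * y j"] by blast
  have "smooth g" using g by (simp add: Espace_def)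
  then obtain f where f: "smooth f" "f a = y 0"
    "\<And>k. nderiv (Suc k) f = (\<lambda>x. l * nderiv k f x + nderiv k g x)"
    using first_order_solution by blast
  have "(\<lambda>x. vderiv f x - l * f x) = g" using f(3)[of 0] by (simp add: nderiv_Suc)
  then have "f \<in> Espace (ls @ [l])" using f g by (simp add: diffop_append Espace_def)
  moreover have "j < Suc (length ls) \<Longrightarrow> nderiv j f a = y j" for j
    by (induction j) (use f(2,3) g(2) in auto)
  ultimately show ?case by auto
qed

section \<open>Homogeneous linear systems\<close>

text \<open>A homogeneous system of m linear equations in more than m unknowns has a nontrivial
  solution (elimination of one unknown per equation).\<close>
lemma homogeneous_system_nontrivial_solution:
  fixes A :: "nat \<Rightarrow> 'i \<Rightarrow> complex"
  assumes "finite I" "m < card I"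
  shows "\<exists>c. (\<exists>i\<in>I. c i \<noteq> 0) \<and> (\<forall>j<m. (\<Sum>i\<in>I. A j i * c i) = 0)"
  using assms
proof (induction m arbitrary: I A)
  case 0
  then obtain i where "i \<in> I" by fastforce
  then show ?case by (intro exI[of _ "\<lambda>_. 1"]) auto
next
  case (Suc m)
  show ?case
  proof (cases "\<forall>i\<in>I. A m i = 0")
    case True
    obtain c where c: "\<exists>i\<in>I. c i \<noteq> 0" "\<forall>j<m. (\<Sum>i\<in>I. A j i * c i) = 0"
      using Suc.IH[of I A] Suc.prems by auto
    show ?thesis
      using c True by (intro exI[of _ c]) (auto simp: less_Suc_eq)
  next
    case False
    then obtain i0 where i0: "i0 \<in> I" "A m i0 \<noteq> 0" by auto
    define I' where "I' = I - {i0}"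
    text \<open>Eliminate the unknown i0 using the last equation.\<close>
    define B where "B = (\<lambda>j i. A j i - A j i0 * A m i / A m i0)"
    have "m < card I'" using Suc.prems i0 by (simp add: I'_def)
    then obtain d where d: "\<exists>i\<in>I'. d i \<noteq> 0" "\<forall>j<m. (\<Sum>i\<in>I'. B j i * d i) = 0"
      using Suc.IH[of I' B] Suc.prems by (auto simp: I'_def)
    define S where "S = (\<Sum>i\<in>I'. A m i * d i)"
    define c where "c = (\<lambda>i. if i = i0 then - S / A m i0 else d i)"
    have split: "(\<Sum>i\<in>I. A j i * c i) = A j i0 * c i0 + (\<Sum>i\<in>I'. A j i * d i)" for j
    proof -
      have "(\<Sum>i\<in>I. A j i * c i) = A j i0 * c i0 + (\<Sum>i\<in>I'. A j i * c i)"
        unfolding I'_def using Suc.prems i0 by (simp add: sum.remove)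
      also have "(\<Sum>i\<in>I'. A j i * c i) = (\<Sum>i\<in>I'. A j i * d i)"
        by (rule sum.cong) (auto simp: c_def I'_def)
      finally show ?thesis .
    qed
    have "(\<Sum>i\<in>I. A j i * c i) = 0" if "j < Suc m" for j
    proof (cases "j = m")
      case True
      then show ?thesis unfolding True split using i0 by (simp add: c_def S_def)
    next
      case False
      then have "j < m" using that by simp
      have "(\<Sum>i\<in>I'. B j i * d i) = (\<Sum>i\<in>I'. A j i * d i) - A j i0 / A m i0 * S"
        unfolding B_def S_def by (simp add: algebra_simps sum_subtractf sum_distrib_left)
      then have "(\<Sum>i\<in>I'. A j i * d i) = A j i0 / A m i0 * S" using d(2) \<open>j < m\<close> by simp
      then show ?thesis unfolding split using i0 by (simp add: c_def)
    qed
    moreover have "\<exists>i\<in>I. c i \<noteq> 0" using d(1) by (auto simp: c_def I'_def)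
    ultimately show ?thesis by blast
  qed
qed

section \<open>Extended Chebyshev systems on two points and the Bernstein basis\<close>

lemma ECT_zero:
  assumes "ECT ls {a, b}" "a \<noteq> b" "f \<in> Espace ls" "zero_order_ge f a i" "zero_order_ge f b j"
    "length ls \<le> i + j"
  shows "f = (\<lambda>_. 0)"
proof (cases "ls = []")
  case True then show ?thesis using assms(3) by (simp add: Espace_def)
next
  case False
  show ?thesis
  proof (rule ccontr)
    assume "f \<noteq> (\<lambda>_. 0)"
    define mult where "mult = (\<lambda>x. if x = a then i else j)"
    have "\<forall>x\<in>{a,b}. zero_order_ge f x (mult x)" using assms(4,5) by (auto simp: mult_def)
    then have "sum mult {a, b} \<le> length ls - 1"
      using assms(1,3) \<open>f \<noteq> (\<lambda>_. 0)\<close> unfolding ECT_def by blast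
    moreover have "sum mult {a, b} = i + j" using assms(2) by (simp add: mult_def)
    ultimately show False using False assms(6) by (cases ls) auto
  qed
qed

text \<open>For m + 1 = length ls, E_ls contains a nonzero element with zeros of order k at a and
  m - k at b: these are m linear conditions on the coefficients w.r.t. a basis of m + 1
  elements adapted to initial values at a.\<close>
lemma Espace_element_with_zeros:
  assumes "ls \<noteq> []" "k \<le> length ls - 1"
  shows "\<exists>f\<in>Espace ls. f \<noteq> (\<lambda>_. 0) \<and> zero_order_ge f a k \<and> zero_order_ge f b (length ls - 1 - k)"
proof -
  define m where "m = length ls - 1"
  have "\<forall>i. \<exists>f\<in>Espace ls. \<forall>j<length ls. nderiv j f a = (if j = i then 1 else 0)"
    by (intro allI Espace_initial_values)
  then obtain \<phi> where phi: "\<And>i. \<phi> i \<in> Espace ls"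
    "\<And>i j. j < length ls \<Longrightarrow> nderiv j (\<phi> i) a = (if j = i then 1 else 0)"
    by metis
  define A where "A = (\<lambda>j i. if j < k then nderiv j (\<phi> i) a else nderiv (j - k) (\<phi> i) b)"
  obtain c where c: "\<exists>i\<in>{..m}. c i \<noteq> 0" "\<forall>j<m. (\<Sum>i\<in>{..m}. A j i * c i) = 0"
    using homogeneous_system_nontrivial_solution[of "{..m}" m A] by auto
  define f where "f = (\<lambda>x. \<Sum>i\<in>{..m}. c i * \<phi> i x)"
  have fE: "f \<in> Espace ls" and f_deriv: "\<And>k. nderiv k f = (\<lambda>x. \<Sum>i\<in>{..m}. c i * nderiv k (\<phi> i) x)"
    using Espace_sum[of "{..m}" \<phi> ls c] phi(1) unfolding f_def by auto
  have "nderiv j f a = (\<Sum>i\<in>{..m}. A j i * c i)" if "j < k" for j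
    using that by (simp add: f_deriv A_def mult.commute)
  then have za: "zero_order_ge f a k"
    using c(2) assms(2) by (simp add: zero_order_ge_def m_def)
  have "nderiv j f b = (\<Sum>i\<in>{..m}. A (j + k) i * c i)" for j
    by (simp add: f_deriv A_def mult.commute)
  then have zb: "zero_order_ge f b (m - k)"
    using c(2) assms(2) by (simp add: zero_order_ge_def m_def less_diff_conv)
  obtain i0 where i0: "i0 \<le> m" "c i0 \<noteq> 0" using c(1) by auto
  have "i0 < length ls" using i0 assms(1) m_def by (cases ls) auto
  then have "nderiv i0 f a = (\<Sum>i\<in>{..m}. c i * (if i0 = i then 1 else 0))"
    by (simp add: f_deriv phi(2))
  also have "\<dots> = c i0" using i0 by (simp add: if_distrib sum.delta cong: if_cong)
  finally have "f \<noteq> (\<lambda>_. 0)" using i0 by auto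
  then show ?thesis using fE za zb m_def by auto
qed

lemma bernstein_conditions_satisfiable:
  assumes "ECT ls {a, b}" "a \<noteq> b" "ls \<noteq> []" "k \<le> length ls - 1"
  shows "\<exists>p. p \<in> Espace ls \<and> zero_order_exact p a k \<and> zero_order_exact p b (length ls - 1 - k)
    \<and> nderiv k p a = 1"
proof -
  define m where "m = length ls - 1"
  obtain f where f: "f \<in> Espace ls" "f \<noteq> (\<lambda>_. 0)" "zero_order_ge f a k" "zero_order_ge f b (m - k)"
    using Espace_element_with_zeros[OF assms(3,4)] m_def by blast
  have len: "length ls = Suc m" using assms(3) m_def by (cases ls) auto
  text \<open>An extra zero at either endpoint would give too many zeros.\<close>
  have "nderiv k f a \<noteq> 0"
  proof
    assume "nderiv k f a = 0"
    then have "zero_order_ge f a (Suc k)" using f(3) by (auto simp: zero_order_ge_def less_Suc_eq)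
    then have "f = (\<lambda>_. 0)" by (rule ECT_zero[OF assms(1,2) f(1) _ f(4)]) (use len assms(4) in simp)
    then show False using f(2) by simp
  qed
  moreover have "nderiv (m - k) f b \<noteq> 0"
  proof
    assume "nderiv (m - k) f b = 0"
    then have "zero_order_ge f b (Suc (m - k))" using f(4) by (auto simp: zero_order_ge_def less_Suc_eq)
    then have "f = (\<lambda>_. 0)" by (rule ECT_zero[OF assms(1,2) f(1) f(3)]) (use len assms(4) in simp)
    then show False using f(2) by simp
  qed
  moreover define c where "c = 1 / nderiv k f a"
  moreover have "nderiv j (\<lambda>x. c * f x) = (\<lambda>x. c * nderiv j f x)" for j
    using f(1) by (simp add: nderiv_cmult Espace_def)
  ultimately show ?thesis
    using f Espace_cmult[OF f(1), of c]
    by (intro exI[of _ "\<lambda>x. c * f x"]) (simp add: zero_order_exact_def zero_order_ge_def m_def)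
qed

lemma bernstein_conditions_unique:
  assumes "ECT ls {a, b}" "a \<noteq> b" "k \<le> length ls - 1"
    and "p \<in> Espace ls" "zero_order_ge p a k" "zero_order_ge p b (length ls - 1 - k)"
    and "q \<in> Espace ls" "zero_order_ge q a k" "zero_order_ge q b (length ls - 1 - k)"
    and "nderiv k p a = nderiv k q a"
  shows "p = q"
proof -
  have "smooth p" "smooth q" using assms by (auto simp: Espace_def)
  then have d: "nderiv j (\<lambda>x. p x - q x) = (\<lambda>x. nderiv j p x - nderiv j q x)" for j
    by (rule nderiv_diff)
  have "zero_order_ge (\<lambda>x. p x - q x) a (Suc k)"
    using assms by (auto simp: d zero_order_ge_def less_Suc_eq)
  moreover have "zero_order_ge (\<lambda>x. p x - q x) b (length ls - 1 - k)"
    using assms by (auto simp: d zero_order_ge_def)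
  ultimately have "(\<lambda>x. p x - q x) = (\<lambda>_. 0)"
    using ECT_zero[OF assms(1,2) Espace_diff[OF assms(4,7)]] assms(3) by simp
  then show ?thesis by (auto simp: fun_eq_iff)
qed

lemma bernstein_props:
  assumes "ECT ls {a, b}" "a \<noteq> b" "ls \<noteq> []" "k \<le> length ls - 1"
  shows "bernstein ls a b k \<in> Espace ls" "zero_order_ge (bernstein ls a b k) a k"
    "zero_order_ge (bernstein ls a b k) b (length ls - 1 - k)" "nderiv k (bernstein ls a b k) a = 1"
proof -
  let ?P = "\<lambda>p. p \<in> Espace ls \<and> zero_order_exact p a k \<and> zero_order_exact p b (length ls - 1 - k)
    \<and> nderiv k p a = 1"
  have "\<exists>!p. ?P p"
    using bernstein_conditions_satisfiable[OF assms] bernstein_conditions_unique[OF assms(1,2,4)]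
    unfolding zero_order_exact_def by metis
  then have "?P (bernstein ls a b k)"
    unfolding bernstein_def by (rule theI')
  then show "bernstein ls a b k \<in> Espace ls" "zero_order_ge (bernstein ls a b k) a k"
    "zero_order_ge (bernstein ls a b k) b (length ls - 1 - k)" "nderiv k (bernstein ls a b k) a = 1"
    by (auto simp: zero_order_exact_def)
qed

theorem mainTheorem9:
  fixes lams :: "complex list" and lam eta :: complex and a b :: real and k :: nat
  assumes "a \<noteq> b"
    and "ECT (lams @ [lam]) {a, b}"
    and "ECT (lams @ [eta]) {a, b}"
    and "ECT lams {a, b}"
    and "k \<le> length lams"
    and "\<forall>x \<in> {min a b<..<max a b}. bernstein (lams @ [lam]) a b k x = bernstein (lams @ [eta]) a b k x"
  shows "lam = eta"
proof -
  define p where "p = bernstein (lams @ [lam]) a b k"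
  define q where "q = bernstein (lams @ [eta]) a b k"
  note P = bernstein_props[OF assms(2,1), of k, folded p_def]
  note Q = bernstein_props[OF assms(3,1), of k, folded q_def]
  have pE: "p \<in> Espace (lams @ [lam])" and qE: "q \<in> Espace (lams @ [eta])"
    and p_zeros: "zero_order_ge p a k" "zero_order_ge p b (length lams - k)"
    and p_norm: "nderiv k p a = 1"
    using P Q assms(5) by auto
  have smooth: "smooth p" "smooth q" using pE qE by (auto simp: Espace_def)
  have "min a b < max a b" using assms(1) by (simp add: min_def max_def)
  then have in_closure: "x \<in> closure {min a b<..<max a b}" if "x \<in> {a, b}" for x
    using that by auto
  have same_jet: "nderiv j p x = nderiv j q x" if "x \<in> {a, b}" for j x
    by (rule nderiv_eq_on_closure[OF smooth open_greaterThanLessThan])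
      (use assms(6) that in_closure in \<open>auto simp: p_def q_def\<close>)
  define h where "h = (\<lambda>x. (vderiv p x - lam * p x) - (vderiv q x - eta * q x))"
  have hE: "h \<in> Espace lams"
    unfolding h_def using Espace_reduce[OF pE] Espace_reduce[OF qE] by (rule Espace_diff)
  have h_jet: "nderiv j h x = (eta - lam) * nderiv j p x" if "x \<in> {a, b}" for j x
    unfolding h_def using nderiv_reduce_difference[OF smooth same_jet[OF that]] .
  have "h = (\<lambda>_. 0)"
    using ECT_zero[OF assms(4,1) hE, of k "length lams - k"] p_zeros assms(5)
    by (simp add: zero_order_ge_def h_jet)
  then show ?thesis using h_jet[of a k] p_norm by simp
qed

end
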